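(* Break the segment $[0,1]$ at two independent uniformly random points into three pieces, and let $A$ denote the area of the triangle with these three side lengths when it exists. Let $A_0 \in (0, \sqrt{3}/36)$. Then, given that a triangle can be formed, the probability that its area exceeds $A_0$ is \[ \mathbb P(A > A_0) = 4\int_{\mu_1}^{\mu_2} \sqrt{k^2(1-k^2)^2 - (8A_0)^2} \; dk, \] where $0 < \mu_1 < \mu_2 < 1$ are the two roots in $(0,1)$ of the polynomial $k(1-k^2) - 8A_0$.
   Context: Three lengths form a triangle iff each is less than the sum of the other two (equivalently, each is less than $1/2$ when they sum to $1$). *)

theory Defs
  imports "HOL-Probability.Probability"
begin

definition break_space :: "(real \<times> real) measure" where
  "break_space = uniform_measure lborel {0..1} \<Otimes>\<^sub>M uniform_measure lborel {0..1}"

definition pieces :: "real \<Rightarrow> real \<Rightarrow> real \<times> real \<times> real" where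
  "pieces x y = (min x y, \<bar>x - y\<bar>, 1 - max x y)"

definition is_triangle :: "real \<times> real \<times> real \<Rightarrow> bool" where
  "is_triangle t = (case t of (a, b, c) \<Rightarrow> a < b + c \<and> b < a + c \<and> c < a + b)"

definition tri_area :: "real \<times> real \<times> real \<Rightarrow> real" where
  "tri_area t = (case t of (a, b, c) \<Rightarrow>
     (let s = (a + b + c) / 2 in sqrt (s * (s - a) * (s - b) * (s - c))))"

end

theory Submission
  imports Defs
begin

text \<open>
  The three pieces a, b, c have perimeter 1, so Heron's formula reads
  2 A^2 = (1/2 - a) (1/2 - b) (1/2 - c), and the pieces form a triangle exactly when this
  product is positive. For a fixed first break point x at distance t > 0 from 1/2 the product
  is a concave quadratic in the second break point y, so the y with area above A form an
  interval of length sqrt ((1/2 - t)^2 - 16 A^2 / t). Integrating over x and substituting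
  t = k^2 / 2 shows that the event {area > A} has probability
  \<integral> sqrt (k^2 (1 - k^2)^2 - (8 A)^2) dk over [0, 1], where the radicand is nonnegative
  exactly between the roots \<mu>1, \<mu>2 of k (1 - k^2) = 8 A. For A = 0 the same formula gives
  the probability 1/4 of forming a triangle.
\<close>

lemma emeasure_break_space:
  assumes "X \<in> sets (borel \<Otimes>\<^sub>M borel)"
  shows "emeasure break_space X =
    (\<integral>\<^sup>+x. emeasure lborel {y\<in>{0..1}. (x, y) \<in> X} * indicator {0..1} x \<partial>lborel)"
proof -
  define U where "U = uniform_measure lborel {0..(1::real)}"
  interpret U: prob_space U
    unfolding U_def by (intro prob_space_uniform_measure) auto
  have sets_U: "sets U = sets borel"
    by (simp add: U_def)
  have X: "X \<in> sets (U \<Otimes>\<^sub>M U)"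
    using assms by (simp add: sets_pair_measure_cong[OF sets_U sets_U])
  have slice: "emeasure U (Pair x -` X) = emeasure lborel {y\<in>{0..1}. (x, y) \<in> X}" for x
    using sets_Pair1[OF X] by (simp add: U_def Int_def divide_ennreal_def)
  have "(\<lambda>x. emeasure U (Pair x -` X)) \<in> borel_measurable borel"
    using U.measurable_emeasure_Pair[OF X] by (simp add: measurable_cong_sets[OF sets_U])
  then have "(\<integral>\<^sup>+x. emeasure U (Pair x -` X) \<partial>U) =
      (\<integral>\<^sup>+x. emeasure U (Pair x -` X) * indicator {0..1} x \<partial>lborel)"
    unfolding U_def by (subst nn_integral_uniform_measure) (auto simp: divide_ennreal_def)
  then show ?thesis
    by (simp add: break_space_def U_def[symmetric] U.emeasure_pair_measure_alt[OF X] slice)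
qed

lemma tri_area_pieces_measurable [measurable]:
  "(\<lambda>\<omega>. tri_area (pieces (fst \<omega>) (snd \<omega>))) \<in> borel_measurable (borel \<Otimes>\<^sub>M borel)"
  unfolding tri_area_def pieces_def by (simp add: case_prod_beta Let_def)

lemma is_triangle_pieces_measurable [measurable]:
  "Measurable.pred (borel \<Otimes>\<^sub>M borel) (\<lambda>\<omega>. is_triangle (pieces (fst \<omega>) (snd \<omega>)))"
  unfolding is_triangle_def pieces_def by (simp add: case_prod_beta)

definition gap_product :: "real \<times> real \<times> real \<Rightarrow> real" where
  "gap_product t = (case t of (a, b, c) \<Rightarrow> (1/2 - a) * (1/2 - b) * (1/2 - c))"

lemma tri_area_unit_perimeter:
  assumes "a + b + c = 1"
  shows "tri_area (a, b, c) = sqrt (gap_product (a, b, c) / 2)"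
proof -
  have s: "(a + b + c) / 2 = 1/2" using assms by simp
  show ?thesis
    unfolding tri_area_def gap_product_def Let_def prod.case s by (simp add: ac_simps)
qed

lemma tri_area_pos: "is_triangle t \<Longrightarrow> 0 < tri_area t"
  by (cases t) (auto simp: is_triangle_def tri_area_def Let_def intro!: mult_pos_pos)

lemma is_triangle_iff_gap_product_pos:
  assumes "0 \<le> a" "0 \<le> b" "0 \<le> c" "a + b + c = 1"
  shows "is_triangle (a, b, c) \<longleftrightarrow> 0 < gap_product (a, b, c)"
  using assms
  by (auto simp: is_triangle_def gap_product_def zero_less_mult_iff mult_less_0_iff)

lemma large_area_triangle_iff:
  assumes "0 \<le> A" "0 \<le> a" "0 \<le> b" "0 \<le> c" "a + b + c = 1"
  shows "A < tri_area (a, b, c) \<and> is_triangle (a, b, c) \<longleftrightarrow> 2 * A\<^sup>2 < gap_product (a, b, c)"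
proof -
  have "A < sqrt (gap_product (a, b, c) / 2) \<longleftrightarrow> A\<^sup>2 < gap_product (a, b, c) / 2"
    using \<open>0 \<le> A\<close> by (metis abs_of_nonneg real_sqrt_abs real_sqrt_less_iff real_less_rsqrt)
  moreover have "2 * A\<^sup>2 < gap_product (a, b, c) \<Longrightarrow> 0 < gap_product (a, b, c)"
    by (smt (verit) zero_le_power2)
  ultimately show ?thesis
    using assms by (auto simp: tri_area_unit_perimeter is_triangle_iff_gap_product_pos)
qed

lemma large_area_pieces_iff:
  assumes "0 \<le> A" "x \<in> {0..1}" "y \<in> {0..1}"
  shows "A < tri_area (pieces x y) \<and> is_triangle (pieces x y) \<longleftrightarrow> 2 * A\<^sup>2 < gap_product (pieces x y)"
  unfolding pieces_def using assms by (intro large_area_triangle_iff) auto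

text \<open>Since \<^term>\<open>sqrt\<close> is odd, \<^term>\<open>chord c t\<close> is negative when the slice it measures
  is empty; \<^term>\<open>ennreal\<close> then turns it into measure 0.\<close>
definition chord :: "real \<Rightarrow> real \<Rightarrow> real" where
  "chord c t = sqrt ((1/2 - t)\<^sup>2 - 4 * c / t)"

lemma less_quadratic_iff_chord:
  assumes "0 < t"
  shows "c < t * w * (1/2 - t - w) \<longleftrightarrow> \<bar>w - (1/2 - t) / 2\<bar> < chord c t / 2"
proof -
  define D where "D = (1/2 - t)\<^sup>2 - 4 * c / t"
  have "t * w * (1/2 - t - w) - c = t * (D / 4 - (w - (1/2 - t) / 2)\<^sup>2)"
    unfolding D_def using assms by (simp add: field_simps power2_eq_square)
  then have "c < t * w * (1/2 - t - w) \<longleftrightarrow> (w - (1/2 - t) / 2)\<^sup>2 < D / 4"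
    using assms by (smt (verit) mult_pos_pos mult_nonneg_nonpos)
  also have "\<dots> \<longleftrightarrow> sqrt ((w - (1/2 - t) / 2)\<^sup>2) < sqrt (D / 4)"
    by (rule real_sqrt_less_iff[symmetric])
  also have "\<dots> \<longleftrightarrow> \<bar>w - (1/2 - t) / 2\<bar> < chord c t / 2"
    by (simp add: chord_def D_def real_sqrt_divide)
  finally show ?thesis .
qed

lemma gap_product_pieces_reflect: "gap_product (pieces (1 - x) (1 - y)) = gap_product (pieces x y)"
  by (simp add: gap_product_def pieces_def min_def max_def abs_minus_commute algebra_simps)

lemma less_gap_product_pieces_iff_left_half:
  assumes "0 \<le> c" "0 \<le> x" "x < 1/2"
  shows "y \<in> {0..1} \<and> c < gap_product (pieces x y) \<longleftrightarrow> c < (1/2 - x) * (y - 1/2) * (1/2 + x - y)"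
proof (cases "x \<le> y")
  case True
  then have "pieces x y = (x, y - x, 1 - y)"
    by (simp add: pieces_def)
  then have "gap_product (pieces x y) = (1/2 - x) * (y - 1/2) * (1/2 + x - y)"
    by (simp add: gap_product_def field_simps)
  moreover have "y \<in> {0..1}" if "c < (1/2 - x) * (y - 1/2) * (1/2 + x - y)"
  proof -
    have "0 < (y - 1/2) * (1/2 + x - y)"
    proof -
      have "0 < (1/2 - x) * ((y - 1/2) * (1/2 + x - y))"
        using that assms(1) by (simp add: mult.assoc)
      then show ?thesis
        using assms(3) by (simp add: zero_less_mult_iff)
    qed
    then show ?thesis
      using assms by (auto simp: zero_less_mult_iff)
  qed
  ultimately show ?thesis by auto
next
  case False
  then have "(1/2 - x) * (y - 1/2) * (1/2 + x - y) < 0"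
    using assms by (simp add: mult_pos_neg mult_neg_pos)
  moreover have "0 \<le> y \<Longrightarrow> gap_product (pieces x y) \<le> 0"
    using assms False by (simp add: gap_product_def pieces_def min_def max_def mult_nonneg_nonpos)
  ultimately show ?thesis using assms by auto
qed

lemma gap_product_pieces_slice_left_half:
  assumes "0 \<le> c" "0 \<le> x" "x < 1/2"
  shows "{y\<in>{0..1}. c < gap_product (pieces x y)} = {y. \<bar>y - (1 + x) / 2\<bar> < chord c (1/2 - x) / 2}"
proof -
  have "c < (1/2 - x) * (y - 1/2) * (1/2 + x - y) \<longleftrightarrow> \<bar>y - (1 + x) / 2\<bar> < chord c (1/2 - x) / 2" for y
  proof -
    have "1/2 - (1/2 - x) - (y - 1/2) = 1/2 + x - y" "y - 1/2 - (1/2 - (1/2 - x)) / 2 = y - (1 + x) / 2"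
      by (simp_all add: field_simps)
    then show ?thesis
      using less_quadratic_iff_chord[of "1/2 - x" c "y - 1/2"] assms(3) by (simp only:)
  qed
  then show ?thesis
    using less_gap_product_pieces_iff_left_half[OF assms] by blast
qed

lemma emeasure_lborel_abs_less: "emeasure lborel {y::real. \<bar>y - m\<bar> < r} = ennreal (2 * r)"
proof (cases "0 \<le> r")
  case True
  have "{y. \<bar>y - m\<bar> < r} = {m - r <..< m + r}" by auto
  then show ?thesis using True by simp
next
  case False
  then have "{y. \<bar>y - m\<bar> < r} = {}" by auto
  then show ?thesis using False by (simp add: ennreal_neg)
qed

lemma emeasure_gap_product_slice:
  assumes "0 \<le> c" "x \<in> {0..1}" "x \<noteq> 1/2"
  shows "emeasure lborel {y\<in>{0..1}. c < gap_product (pieces x y)} = ennreal (chord c \<bar>x - 1/2\<bar>)"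
proof (cases "x < 1/2")
  case True
  then show ?thesis
    using assms emeasure_lborel_abs_less[of "(1 + x) / 2" "chord c (1/2 - x) / 2"]
    by (subst gap_product_pieces_slice_left_half) auto
next
  case False
  have "y \<in> {0..1} \<and> c < gap_product (pieces x y) \<longleftrightarrow> \<bar>y - x / 2\<bar> < chord c (x - 1/2) / 2" for y
  proof -
    have centre: "\<bar>(1 - y) - (1 + (1 - x)) / 2\<bar> = \<bar>y - x / 2\<bar>" and width: "1/2 - (1 - x) = x - 1/2"
      by (simp_all add: abs_if field_simps)
    have "y \<in> {0..1} \<and> c < gap_product (pieces x y) \<longleftrightarrow>
        1 - y \<in> {z\<in>{0..1}. c < gap_product (pieces (1 - x) z)}"
      by (auto simp: gap_product_pieces_reflect)
    also have "\<dots> \<longleftrightarrow> \<bar>(1 - y) - (1 + (1 - x)) / 2\<bar> < chord c (1/2 - (1 - x)) / 2"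
      using assms False by (subst gap_product_pieces_slice_left_half) auto
    also have "\<dots> \<longleftrightarrow> \<bar>y - x / 2\<bar> < chord c (x - 1/2) / 2"
      by (simp only: centre width)
    finally show ?thesis .
  qed
  then have "{y\<in>{0..1}. c < gap_product (pieces x y)} = {y. \<bar>y - x / 2\<bar> < chord c (x - 1/2) / 2}"
    by blast
  then show ?thesis
    using False emeasure_lborel_abs_less[of "x / 2" "chord c (x - 1/2) / 2"] by simp
qed

lemma nn_integral_fold_unit_interval:
  fixes f :: "real \<Rightarrow> real"
  assumes [measurable]: "f \<in> borel_measurable borel"
  shows "(\<integral>\<^sup>+x. ennreal (f \<bar>x - 1/2\<bar>) * indicator {0..1} x \<partial>lborel) =
    (\<integral>\<^sup>+k. ennreal (2 * k * f (k\<^sup>2 / 2)) * indicator {0..1} k \<partial>lborel)"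
proof -
  let ?F = "\<lambda>x. ennreal (f \<bar>x - 1/2\<bar>)"
  have "(\<integral>\<^sup>+x. ?F x * indicator {0..1} x \<partial>lborel) =
      (\<integral>\<^sup>+x. ?F x * indicator {0..1/2} x + ?F x * indicator {1/2..1} x \<partial>lborel)"
    by (intro nn_integral_cong_AE, rule eventually_mono[OF AE_lborel_singleton[of "1/2"]])
      (auto simp: indicator_def)
  also have "\<dots> = (\<integral>\<^sup>+x. ?F x * indicator {0..1/2} x \<partial>lborel) + (\<integral>\<^sup>+x. ?F x * indicator {1/2..1} x \<partial>lborel)"
    by (rule nn_integral_add) auto
  also have "(\<integral>\<^sup>+x. ?F x * indicator {0..1/2} x \<partial>lborel) = (\<integral>\<^sup>+x. ?F x * indicator {1/2..1} x \<partial>lborel)"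
  proof -
    have "?F (1 - x) = ?F x" "indicator {0..1/2} (1 - x) = (indicator {1/2..1} x :: ennreal)" for x :: real
      by (auto simp: abs_minus_commute indicator_def)
    then show ?thesis
      using nn_integral_real_affine[of "\<lambda>x. ?F x * indicator {0..1/2} x" "-1" 1] by simp
  qed
  also have "(\<integral>\<^sup>+x. ?F x * indicator {1/2..1} x \<partial>lborel) =
      (\<integral>\<^sup>+x. ennreal (f (x - 1/2) * indicator {(1 + 0\<^sup>2) / 2..(1 + 1\<^sup>2) / 2} x) \<partial>lborel)"
    by (intro nn_integral_cong) (simp add: indicator_def)
  also have "\<dots> = (\<integral>\<^sup>+k. ennreal (f ((1 + k\<^sup>2) / 2 - 1/2) * k * indicator {0..1} k) \<partial>lborel)"
    by (rule nn_integral_substitution[where g = "\<lambda>k. (1 + k\<^sup>2) / 2"])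
      (auto intro!: derivative_eq_intros continuous_intros simp: set_borel_measurable_def)
  also have "\<dots> + \<dots> = 2 * \<dots>"
    by (rule mult_2[symmetric])
  also have "\<dots> = (\<integral>\<^sup>+k. ennreal (2 * k * f (k\<^sup>2 / 2)) * indicator {0..1} k \<partial>lborel)"
  proof -
    have "2 * ennreal (f ((1 + k\<^sup>2) / 2 - 1/2) * k) = ennreal (2 * k * f (k\<^sup>2 / 2))" for k :: real
    proof -
      have e: "(1 + k\<^sup>2) / 2 - 1/2 = k\<^sup>2 / 2" by (simp add: field_simps)
      show ?thesis
        unfolding e using ennreal_mult'[of 2 "f (k\<^sup>2 / 2) * k"] by (simp add: ac_simps)
    qed
    then show ?thesis
      by (subst nn_integral_cmult[symmetric]) (auto intro!: nn_integral_cong simp: indicator_def)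
  qed
  finally show ?thesis .
qed

lemma chord_at_half_square:
  assumes "0 \<le> k"
  shows "ennreal (2 * k * chord (2 * A\<^sup>2) (k\<^sup>2 / 2)) = ennreal (sqrt (k\<^sup>2 * (1 - k\<^sup>2)\<^sup>2 - (8 * A)\<^sup>2))"
proof (cases "k = 0")
  case True
  then show ?thesis by (simp add: ennreal_neg)
next
  case False
  have "2 * k * chord (2 * A\<^sup>2) (k\<^sup>2 / 2) =
      sqrt ((2 * k)\<^sup>2) * sqrt ((1/2 - k\<^sup>2 / 2)\<^sup>2 - 4 * (2 * A\<^sup>2) / (k\<^sup>2 / 2))"
    using assms by (simp only: chord_def real_sqrt_abs abs_of_nonneg zero_le_mult_iff)
  also have "\<dots> = sqrt ((2 * k)\<^sup>2 * ((1/2 - k\<^sup>2 / 2)\<^sup>2 - 4 * (2 * A\<^sup>2) / (k\<^sup>2 / 2)))"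
    by (rule real_sqrt_mult[symmetric])
  also have "(2 * k)\<^sup>2 * ((1/2 - k\<^sup>2 / 2)\<^sup>2 - 4 * (2 * A\<^sup>2) / (k\<^sup>2 / 2)) = k\<^sup>2 * (1 - k\<^sup>2)\<^sup>2 - (8 * A)\<^sup>2"
    using False by (simp add: field_simps power2_eq_square)
  finally show ?thesis by simp
qed

lemma emeasure_large_area_triangle:
  assumes "0 \<le> A"
  shows "emeasure break_space
      {\<omega>. A < tri_area (pieces (fst \<omega>) (snd \<omega>)) \<and> is_triangle (pieces (fst \<omega>) (snd \<omega>))} =
    (\<integral>\<^sup>+k. ennreal (sqrt (k\<^sup>2 * (1 - k\<^sup>2)\<^sup>2 - (8 * A)\<^sup>2)) * indicator {0..1} k \<partial>lborel)"
    (is "emeasure break_space ?S = _")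
proof -
  have "{\<omega>\<in>space (borel \<Otimes>\<^sub>M borel). A < tri_area (pieces (fst \<omega>) (snd \<omega>)) \<and>
      is_triangle (pieces (fst \<omega>) (snd \<omega>))} \<in> sets (borel \<Otimes>\<^sub>M borel)"
    by measurable
  then have "emeasure break_space ?S =
      (\<integral>\<^sup>+x. emeasure lborel {y\<in>{0..1}. (x, y) \<in> ?S} * indicator {0..1} x \<partial>lborel)"
    by (intro emeasure_break_space) (simp add: space_pair_measure)
  also have "\<dots> = (\<integral>\<^sup>+x. ennreal (chord (2 * A\<^sup>2) \<bar>x - 1/2\<bar>) * indicator {0..1} x \<partial>lborel)"
  proof (intro nn_integral_cong_AE, rule eventually_mono[OF AE_lborel_singleton[of "1/2"]])
    \<comment> \<open>at x = 1/2 the division in \<^term>\<open>chord\<close> degenerates\<close>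
    fix x :: real
    assume "x \<noteq> 1/2"
    have "x \<in> {0..1} \<Longrightarrow> {y\<in>{0..1}. (x, y) \<in> ?S} = {y\<in>{0..1}. 2 * A\<^sup>2 < gap_product (pieces x y)}"
      using large_area_pieces_iff[OF assms] by auto
    then show "emeasure lborel {y\<in>{0..1}. (x, y) \<in> ?S} * indicator {0..1} x =
        ennreal (chord (2 * A\<^sup>2) \<bar>x - 1/2\<bar>) * indicator {0..1} x"
      using emeasure_gap_product_slice[of "2 * A\<^sup>2" x] \<open>x \<noteq> 1/2\<close> by (simp add: indicator_def)
  qed
  also have "\<dots> = (\<integral>\<^sup>+k. ennreal (2 * k * chord (2 * A\<^sup>2) (k\<^sup>2 / 2)) * indicator {0..1} k \<partial>lborel)"
    by (rule nn_integral_fold_unit_interval) (simp add: chord_def)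
  also have "\<dots> = (\<integral>\<^sup>+k. ennreal (sqrt (k\<^sup>2 * (1 - k\<^sup>2)\<^sup>2 - (8 * A)\<^sup>2)) * indicator {0..1} k \<partial>lborel)"
    by (intro nn_integral_cong) (simp add: chord_at_half_square indicator_def)
  finally show ?thesis .
qed

lemma emeasure_is_triangle: "emeasure break_space {\<omega>. is_triangle (pieces (fst \<omega>) (snd \<omega>))} = ennreal (1/4)"
proof -
  have "{\<omega>. is_triangle (pieces (fst \<omega>) (snd \<omega>))} =
      {\<omega>. 0 < tri_area (pieces (fst \<omega>) (snd \<omega>)) \<and> is_triangle (pieces (fst \<omega>) (snd \<omega>))}"
    using tri_area_pos by blast
  also have "emeasure break_space \<dots> =
      (\<integral>\<^sup>+k. ennreal (sqrt (k\<^sup>2 * (1 - k\<^sup>2)\<^sup>2 - (8 * 0)\<^sup>2)) * indicator {0..1} k \<partial>lborel)"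
    by (rule emeasure_large_area_triangle) simp
  also have "\<dots> = (\<integral>\<^sup>+k. ennreal (k - k ^ 3) * indicator {0..1} k \<partial>lborel)"
  proof (intro nn_integral_cong)
    fix k :: real
    have "sqrt (k\<^sup>2 * (1 - k\<^sup>2)\<^sup>2 - (8 * 0)\<^sup>2) = k - k ^ 3" if "k \<in> {0..1}"
    proof -
      have "0 \<le> k * (1 - k\<^sup>2)"
        using that by (simp add: power_le_one)
      then have "sqrt ((k * (1 - k\<^sup>2))\<^sup>2) = k * (1 - k\<^sup>2)"
        by simp
      then show ?thesis
        by (simp add: power_mult_distrib algebra_simps power2_eq_square power3_eq_cube)
    qed
    then show "ennreal (sqrt (k\<^sup>2 * (1 - k\<^sup>2)\<^sup>2 - (8 * 0)\<^sup>2)) * indicator {0..1} k =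
        ennreal (k - k ^ 3) * indicator {0..1} k"
      by (simp add: indicator_def)
  qed
  also have "\<dots> = ennreal (1/4)"
  proof (rule nn_integral_has_integral_lebesgue')
    show "0 \<le> k - k ^ 3" if "k \<in> {0..1}" for k :: real
      using that mult_left_mono[of "k * k" 1 k] mult_le_one[of k k] by (simp add: power3_eq_cube)
    have "((\<lambda>k::real. k - k ^ 3) has_integral (1\<^sup>2 / 2 - 1 ^ 4 / 4 - (0\<^sup>2 / 2 - 0 ^ 4 / 4))) {0..1}"
      by (intro fundamental_theorem_of_calculus)
        (auto intro!: derivative_eq_intros simp: has_real_derivative_iff_has_vector_derivative[symmetric])
    then show "((\<lambda>k::real. k - k ^ 3) has_integral 1/4) {0..1}"
      by simp
  qed
  finally show ?thesis .
qed

lemma cubic_factor_two_roots: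
  fixes a \<mu>1 \<mu>2 k :: real
  assumes "\<mu>1 \<noteq> \<mu>2" "\<mu>1 * (1 - \<mu>1\<^sup>2) = a" "\<mu>2 * (1 - \<mu>2\<^sup>2) = a"
  shows "k * (1 - k\<^sup>2) - a = (k - \<mu>1) * (\<mu>2 - k) * (k + \<mu>1 + \<mu>2)"
proof -
  have "(\<mu>1 - \<mu>2) * (1 - (\<mu>1\<^sup>2 + \<mu>1 * \<mu>2 + \<mu>2\<^sup>2)) = \<mu>1 * (1 - \<mu>1\<^sup>2) - \<mu>2 * (1 - \<mu>2\<^sup>2)"
    by (simp add: algebra_simps power2_eq_square)
  then have sum_sq: "\<mu>1\<^sup>2 + \<mu>1 * \<mu>2 + \<mu>2\<^sup>2 = 1"
    using assms by simp
  have "a = \<mu>1 * ((\<mu>1\<^sup>2 + \<mu>1 * \<mu>2 + \<mu>2\<^sup>2) - \<mu>1\<^sup>2)"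
    using assms(2) sum_sq by simp
  then have a: "a = \<mu>1 * \<mu>2 * (\<mu>1 + \<mu>2)"
    by (simp add: algebra_simps power2_eq_square)
  have "(k - \<mu>1) * (\<mu>2 - k) * (k + \<mu>1 + \<mu>2) =
      k * (\<mu>1\<^sup>2 + \<mu>1 * \<mu>2 + \<mu>2\<^sup>2) - k ^ 3 - \<mu>1 * \<mu>2 * (\<mu>1 + \<mu>2)"
    by (simp add: algebra_simps power2_eq_square power3_eq_cube)
  also have "\<dots> = k * (1 - k\<^sup>2) - a"
    unfolding sum_sq a by (simp add: algebra_simps power2_eq_square power3_eq_cube)
  finally show ?thesis ..
qed

lemma radicand_nonneg_iff_between_roots:
  fixes A \<mu>1 \<mu>2 k :: real
  assumes "0 < A" "0 \<le> \<mu>1" "\<mu>1 < \<mu>2"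
    and "\<mu>1 * (1 - \<mu>1\<^sup>2) = 8 * A" "\<mu>2 * (1 - \<mu>2\<^sup>2) = 8 * A"
    and "k \<in> {0..1}"
  shows "0 \<le> k\<^sup>2 * (1 - k\<^sup>2)\<^sup>2 - (8 * A)\<^sup>2 \<longleftrightarrow> k \<in> {\<mu>1..\<mu>2}"
proof -
  have "0 \<le> k * (1 - k\<^sup>2)"
    using assms(6) by (simp add: power_le_one)
  define P where "P = (k + \<mu>1 + \<mu>2) * (k * (1 - k\<^sup>2) + 8 * A)"
  have "0 < P"
    unfolding P_def using assms \<open>0 \<le> k * (1 - k\<^sup>2)\<close> by (intro mult_pos_pos) auto
  have "k\<^sup>2 * (1 - k\<^sup>2)\<^sup>2 - (8 * A)\<^sup>2 = (k * (1 - k\<^sup>2) - 8 * A) * (k * (1 - k\<^sup>2) + 8 * A)"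
    by (simp add: algebra_simps power2_eq_square)
  also have "\<dots> = (k - \<mu>1) * (\<mu>2 - k) * P"
    unfolding P_def using cubic_factor_two_roots[of \<mu>1 \<mu>2 "8 * A" k] assms by simp
  finally have "0 \<le> k\<^sup>2 * (1 - k\<^sup>2)\<^sup>2 - (8 * A)\<^sup>2 \<longleftrightarrow> 0 \<le> (k - \<mu>1) * (\<mu>2 - k)"
    using \<open>0 < P\<close> by (simp add: zero_le_mult_iff)
  also have "\<dots> \<longleftrightarrow> k \<in> {\<mu>1..\<mu>2}"
    using assms(3) by (auto simp: zero_le_mult_iff)
  finally show ?thesis .
qed

lemma measure_large_area_triangle:
  fixes A \<mu>1 \<mu>2 :: real
  assumes "0 < A" "0 \<le> \<mu>1" "\<mu>1 < \<mu>2" "\<mu>2 \<le> 1"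
    and roots: "\<mu>1 * (1 - \<mu>1\<^sup>2) = 8 * A" "\<mu>2 * (1 - \<mu>2\<^sup>2) = 8 * A"
  shows "measure break_space
      {\<omega>. A < tri_area (pieces (fst \<omega>) (snd \<omega>)) \<and> is_triangle (pieces (fst \<omega>) (snd \<omega>))} =
    integral {\<mu>1..\<mu>2} (\<lambda>k. sqrt (k\<^sup>2 * (1 - k\<^sup>2)\<^sup>2 - (8 * A)\<^sup>2))"
proof -
  let ?f = "\<lambda>k. sqrt (k\<^sup>2 * (1 - k\<^sup>2)\<^sup>2 - (8 * A)\<^sup>2)"
  have nonneg_iff: "k \<in> {0..1} \<Longrightarrow> 0 \<le> k\<^sup>2 * (1 - k\<^sup>2)\<^sup>2 - (8 * A)\<^sup>2 \<longleftrightarrow> k \<in> {\<mu>1..\<mu>2}" for k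
    using radicand_nonneg_iff_between_roots[OF assms(1-3) roots] by blast
  have f_nonneg: "0 \<le> ?f k" if "k \<in> {\<mu>1..\<mu>2}" for k
    using nonneg_iff[of k] that assms by auto
  have f_integral: "(?f has_integral integral {\<mu>1..\<mu>2} ?f) {\<mu>1..\<mu>2}"
    by (intro integrable_integral integrable_continuous_interval continuous_intros)
  have "(\<integral>\<^sup>+k. ennreal (?f k) * indicator {0..1} k \<partial>lborel) =
      (\<integral>\<^sup>+k. ennreal (?f k) * indicator {\<mu>1..\<mu>2} k \<partial>lborel)"
  proof (intro nn_integral_cong)
    fix k :: real
    have "?f k < 0" if "k \<in> {0..1}" "k \<notin> {\<mu>1..\<mu>2}"
    proof -
      have "\<not> 0 \<le> k\<^sup>2 * (1 - k\<^sup>2)\<^sup>2 - (8 * A)\<^sup>2"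
        using nonneg_iff[OF that(1)] that(2) by blast
      then show ?thesis by simp
    qed
    then show "ennreal (?f k) * indicator {0..1} k = ennreal (?f k) * indicator {\<mu>1..\<mu>2} k"
      using assms by (auto simp: indicator_def ennreal_neg)
  qed
  also have "\<dots> = ennreal (integral {\<mu>1..\<mu>2} ?f)"
    using f_nonneg f_integral by (rule nn_integral_has_integral_lebesgue')
  finally show ?thesis
    using emeasure_large_area_triangle[of A] assms(1) has_integral_nonneg[OF f_integral f_nonneg]
    by (simp add: measure_def)
qed

theorem mainTheorem2:
  fixes A0 \<mu>1 \<mu>2 :: real
  assumes "0 < A0" and "A0 < sqrt 3 / 36"
    and "0 < \<mu>1" and "\<mu>1 < \<mu>2" and "\<mu>2 < 1"
    and "\<mu>1 * (1 - \<mu>1\<^sup>2) - 8 * A0 = 0"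
    and "\<mu>2 * (1 - \<mu>2\<^sup>2) - 8 * A0 = 0"
    and "\<And>k. 0 < k \<Longrightarrow> k < 1 \<Longrightarrow> k * (1 - k\<^sup>2) - 8 * A0 = 0 \<Longrightarrow> k = \<mu>1 \<or> k = \<mu>2"
  shows "\<P>(\<omega> in break_space. tri_area (pieces (fst \<omega>) (snd \<omega>)) > A0
            \<bar> is_triangle (pieces (fst \<omega>) (snd \<omega>)))
         = 4 * integral {\<mu>1..\<mu>2} (\<lambda>k. sqrt (k\<^sup>2 * (1 - k\<^sup>2)\<^sup>2 - (8 * A0)\<^sup>2))"
proof -
  have "space break_space = UNIV"
    by (simp add: break_space_def space_pair_measure)
  then have "\<P>(\<omega> in break_space. tri_area (pieces (fst \<omega>) (snd \<omega>)) > A0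
            \<bar> is_triangle (pieces (fst \<omega>) (snd \<omega>))) =
      measure break_space
        {\<omega>. A0 < tri_area (pieces (fst \<omega>) (snd \<omega>)) \<and> is_triangle (pieces (fst \<omega>) (snd \<omega>))} /
      measure break_space {\<omega>. is_triangle (pieces (fst \<omega>) (snd \<omega>))}"
    by (simp add: cond_prob_def)
  also have "measure break_space
      {\<omega>. A0 < tri_area (pieces (fst \<omega>) (snd \<omega>)) \<and> is_triangle (pieces (fst \<omega>) (snd \<omega>))} =
    integral {\<mu>1..\<mu>2} (\<lambda>k. sqrt (k\<^sup>2 * (1 - k\<^sup>2)\<^sup>2 - (8 * A0)\<^sup>2))"
    using assms(1,3-7) by (intro measure_large_area_triangle) auto
  also have "measure break_space {\<omega>. is_triangle (pieces (fst \<omega>) (snd \<omega>))} = 1/4"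
    using emeasure_is_triangle by (simp add: measure_def)
  finally show ?thesis
    by simp
qed

end
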